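(* Let $X$ be an $X$-set parameter, let $G$ be a graph, and let $R\subseteq V(G)$. Then the map $\nu_R$, $\nu_R(S)=S\ominus R$, is a graph automorphism of $\mathscr{X}^{\rm TAR}(G)$ if and only if $R$ is $X$-irrelevant.
   Context: All graphs are simple, finite, with nonempty vertex set. An $X$-set parameter is a graph parameter $X(G)$ defined as the minimum cardinality of an $X$-set of $G$, where the $X$-sets of each graph are subsets of its vertex set determined by some property satisfying: (1) supersets (within $V(G)$) of $X$-sets are $X$-sets; (2) the empty set is never an $X$-set; (3) an $X$-set of a disconnected graph is the union of an $X$-set of each component; (4) if $G$ has no isolated vertices, every set of $|V(G)|-1$ vertices is an $X$-set. The $X$-TAR graph $\mathscr{X}^{\rm TAR}(G)$ has as vertices all $X$-sets of $G$, with $S_1,S_2$ adjacent iff $|S_1\ominus S_2|=1$ (symmetric difference). The map $\nu_R$ is defined on the vertices of $\mathscr{X}^{\rm TAR}(G)$ with values in the power set of $V(G)$. A vertex $v$ of $G$ is $X$-irrelevant if $v\notin S$ for every minimal $X$-set $S$ of $G$; a set $R$ is $X$-irrelevant if all its vertices are $X$-irrelevant. *)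

theory Defs
  imports Main
begin

type_synonym 'a graph = "'a set \<times> 'a set set"

abbreviation verts :: "'a graph \<Rightarrow> 'a set" where "verts G \<equiv> fst G"
abbreviation edges :: "'a graph \<Rightarrow> 'a set set" where "edges G \<equiv> snd G"

definition is_graph :: "'a graph \<Rightarrow> bool" where
  "is_graph G \<longleftrightarrow> finite (verts G) \<and> verts G \<noteq> {} \<and>
     (\<forall>e\<in>edges G. \<exists>u v. e = {u, v} \<and> u \<noteq> v \<and> u \<in> verts G \<and> v \<in> verts G)"

definition adj_rel :: "'a graph \<Rightarrow> ('a \<times> 'a) set" where
  "adj_rel G = {(u, w). {u, w} \<in> edges G}"

definition components :: "'a graph \<Rightarrow> 'a set set" where
  "components G = {C. \<exists>v\<in>verts G. C = {w. (v, w) \<in> (adj_rel G)\<^sup>*}}"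

definition induced :: "'a graph \<Rightarrow> 'a set \<Rightarrow> 'a graph" where
  "induced G C = (C, {e\<in>edges G. e \<subseteq> C})"

definition isolated :: "'a graph \<Rightarrow> 'a \<Rightarrow> bool" where
  "isolated G v \<longleftrightarrow> v \<in> verts G \<and> (\<forall>e\<in>edges G. v \<notin> e)"

definition sym_diff :: "'a set \<Rightarrow> 'a set \<Rightarrow> 'a set" where
  "sym_diff A B = (A - B) \<union> (B - A)"

definition Xset_param :: "('a graph \<Rightarrow> 'a set \<Rightarrow> bool) \<Rightarrow> bool" where
  "Xset_param X \<longleftrightarrow>
    (\<forall>G S. is_graph G \<longrightarrow> X G S \<longrightarrow> S \<subseteq> verts G) \<and>
    (\<forall>G S T. is_graph G \<longrightarrow> X G S \<longrightarrow> S \<subseteq> T \<longrightarrow> T \<subseteq> verts G \<longrightarrow> X G T) \<and>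
    (\<forall>G. is_graph G \<longrightarrow> \<not> X G {}) \<and>
    (\<forall>G S. is_graph G \<longrightarrow> card (components G) \<ge> 2 \<longrightarrow>
        (X G S \<longleftrightarrow> S \<subseteq> verts G \<and> (\<forall>C\<in>components G. X (induced G C) (S \<inter> C)))) \<and>
    (\<forall>G S. is_graph G \<longrightarrow> (\<forall>v\<in>verts G. \<not> isolated G v) \<longrightarrow>
        S \<subseteq> verts G \<longrightarrow> card S = card (verts G) - 1 \<longrightarrow> X G S)"

definition minimal_Xset :: "('a graph \<Rightarrow> 'a set \<Rightarrow> bool) \<Rightarrow> 'a graph \<Rightarrow> 'a set \<Rightarrow> bool" where
  "minimal_Xset X G S \<longleftrightarrow> X G S \<and> (\<forall>T. T \<subset> S \<longrightarrow> \<not> X G T)"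

definition X_irrelevant_set :: "('a graph \<Rightarrow> 'a set \<Rightarrow> bool) \<Rightarrow> 'a graph \<Rightarrow> 'a set \<Rightarrow> bool" where
  "X_irrelevant_set X G R \<longleftrightarrow> (\<forall>v\<in>R. \<forall>S. minimal_Xset X G S \<longrightarrow> v \<notin> S)"

definition TAR_verts :: "('a graph \<Rightarrow> 'a set \<Rightarrow> bool) \<Rightarrow> 'a graph \<Rightarrow> 'a set set" where
  "TAR_verts X G = {S. X G S}"

definition TAR_adj :: "'a set \<Rightarrow> 'a set \<Rightarrow> bool" where
  "TAR_adj S1 S2 \<longleftrightarrow> card (sym_diff S1 S2) = 1"

definition nu :: "'a set \<Rightarrow> 'a set \<Rightarrow> 'a set" where
  "nu R S = sym_diff S R"

definition is_automorphism :: "'b set \<Rightarrow> ('b \<Rightarrow> 'b \<Rightarrow> bool) \<Rightarrow> ('b \<Rightarrow> 'b) \<Rightarrow> bool" where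
  "is_automorphism Vs adj f \<longleftrightarrow> bij_betw f Vs Vs \<and>
     (\<forall>a\<in>Vs. \<forall>b\<in>Vs. adj a b \<longleftrightarrow> adj (f a) (f b))"

end

theory Submission
  imports Defs
begin

text \<open>Since \<open>\<nu>\<^sub>R\<close> is an involution that preserves symmetric differences, it is an
  automorphism of the X-TAR graph exactly when it maps X-sets to X-sets. If some minimal X-set
  \<open>M\<close> met \<open>R\<close>, then \<open>M \<union> R\<close> would be an X-set whose image \<open>M - R\<close> is a proper subset of \<open>M\<close>,
  hence not an X-set. Conversely, if \<open>R\<close> is X-irrelevant, every X-set \<open>S\<close> contains a minimal
  X-set disjoint from \<open>R\<close>, which therefore lies in \<open>S \<ominus> R\<close>; so \<open>S \<ominus> R\<close> is an X-set.\<close>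

lemma Xset_param_subset_verts:
  assumes "Xset_param X" "is_graph G" "X G S"
  shows "S \<subseteq> verts G"
  using assms(1)[unfolded Xset_param_def, THEN conjunct1] assms(2,3) by blast

lemma Xset_param_mono:
  assumes "Xset_param X" "is_graph G" "X G S" "S \<subseteq> T" "T \<subseteq> verts G"
  shows "X G T"
  using assms(1)[unfolded Xset_param_def, THEN conjunct2, THEN conjunct1] assms(2-5) by blast

lemma exists_minimal_Xset_subset:
  assumes "finite S" "X G S"
  shows "\<exists>M \<subseteq> S. minimal_Xset X G M"
  using assms
proof (induction S rule: finite_psubset_induct)
  case (psubset S)
  show ?case
  proof (cases "minimal_Xset X G S")
    case False
    then obtain T where "T \<subset> S" "X G T"
      using psubset.prems unfolding minimal_Xset_def by blast
    then show ?thesis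
      using psubset.IH by (meson order.trans psubset_imp_subset)
  qed blast
qed

lemma nu_nu [simp]: "nu R (nu R S) = S"
  unfolding nu_def sym_diff_def by auto

lemma TAR_adj_nu [simp]: "TAR_adj (nu R A) (nu R B) = TAR_adj A B"
proof -
  have "sym_diff (nu R A) (nu R B) = sym_diff A B"
    unfolding nu_def sym_diff_def by auto
  then show ?thesis
    unfolding TAR_adj_def by simp
qed

lemma is_automorphism_involution_iff:
  assumes "\<And>a. f (f a) = a" and "\<And>a b. adj (f a) (f b) = adj a b"
  shows "is_automorphism Vs adj f \<longleftrightarrow> f ` Vs \<subseteq> Vs"
proof
  assume "f ` Vs \<subseteq> Vs"
  then have "bij_betw f Vs Vs"
    by (intro bij_betw_byWitness[where f' = f]) (auto simp: assms(1))
  then show "is_automorphism Vs adj f"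
    unfolding is_automorphism_def by (simp add: assms(2))
qed (simp add: is_automorphism_def bij_betw_def)

lemma X_irrelevant_if_nu_image_TAR_verts_subset:
  assumes X: "Xset_param X" and G: "is_graph G" and R: "R \<subseteq> verts G"
    and closed: "nu R ` TAR_verts X G \<subseteq> TAR_verts X G"
  shows "X_irrelevant_set X G R"
  unfolding X_irrelevant_set_def
proof (intro ballI allI impI notI)
  fix v M
  assume "v \<in> R" and M: "minimal_Xset X G M" and "v \<in> M"
  then have "M - R \<subset> M"
    by blast
  then have not_X: "\<not> X G (M - R)"
    using M unfolding minimal_Xset_def by blast
  have XM: "X G M"
    using M unfolding minimal_Xset_def by blast
  have "X G (M \<union> R)"
    by (rule Xset_param_mono[OF X G XM]) (use Xset_param_subset_verts[OF X G XM] R in auto)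
  moreover have "nu R (M \<union> R) = M - R"
    unfolding nu_def sym_diff_def by auto
  ultimately have "X G (M - R)"
    using closed unfolding TAR_verts_def by auto
  with not_X show False ..
qed

lemma nu_image_TAR_verts_subset_if_X_irrelevant:
  assumes X: "Xset_param X" and G: "is_graph G" and R: "R \<subseteq> verts G"
    and irrelevant: "X_irrelevant_set X G R"
  shows "nu R ` TAR_verts X G \<subseteq> TAR_verts X G"
proof (rule image_subsetI)
  fix S
  assume "S \<in> TAR_verts X G"
  then have XS: "X G S"
    unfolding TAR_verts_def by simp
  have S: "S \<subseteq> verts G"
    using Xset_param_subset_verts[OF X G XS] .
  then have "finite S"
    using G unfolding is_graph_def by (meson finite_subset)
  then obtain M where "M \<subseteq> S" and M: "minimal_Xset X G M"
    using exists_minimal_Xset_subset[of S X G] XS by blast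
  moreover have "M \<inter> R = {}"
    using irrelevant M unfolding X_irrelevant_set_def by blast
  ultimately have "M \<subseteq> nu R S"
    unfolding nu_def sym_diff_def by blast
  moreover have "nu R S \<subseteq> verts G"
    using S R unfolding nu_def sym_diff_def by blast
  moreover have "X G M"
    using M unfolding minimal_Xset_def by blast
  ultimately have "X G (nu R S)"
    using Xset_param_mono[OF X G] by blast
  then show "nu R S \<in> TAR_verts X G"
    unfolding TAR_verts_def by simp
qed

theorem theorem2p8:
  fixes X :: "'a graph \<Rightarrow> 'a set \<Rightarrow> bool" and G :: "'a graph" and R :: "'a set"
  assumes "Xset_param X" and "is_graph G" and "R \<subseteq> verts G"
  shows "is_automorphism (TAR_verts X G) TAR_adj (nu R) \<longleftrightarrow> X_irrelevant_set X G R"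
proof -
  have "nu R ` TAR_verts X G \<subseteq> TAR_verts X G \<longleftrightarrow> X_irrelevant_set X G R"
    using X_irrelevant_if_nu_image_TAR_verts_subset[OF assms]
      nu_image_TAR_verts_subset_if_X_irrelevant[OF assms] by blast
  then show ?thesis
    by (simp add: is_automorphism_involution_iff)
qed

end
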